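(* Let $G$ be a modified planar graph with $m$ edges and let $\mathcal{T}$ be a separator tree of $G$ of height $\eta=O(\log m)$ in which every node $H$ satisfies $|S(H)|\le c\lceil\sqrt{|E(H)|}\rceil$ for a fixed constant $c$. Let $\mathcal{H}$ be a set of $K$ nodes of $\mathcal{T}$. Then \[\sum_{H\in\mathcal{P}_{\mathcal{T}}(\mathcal{H})}\big(|\partial H|+|F_H|\big)\le\widetilde{O}(\sqrt{mK}).\]
   Context: A modified planar graph is a graph obtained from a planar graph by adding two new vertices $s,t$ and any number of edges incident to them (parallel edges allowed). Separator tree: a rooted binary tree $\mathcal{T}$ whose nodes are regions (edge-induced subgraphs) $H$ of $G$, each storing vertex sets $\partial H$, $S(H)$, $F_H$, defined top-down: the root is $G$ with $\partial G=\emptyset$, $F_G=S(G)$; a non-leaf node $H$ has two children $D_1,D_2$ whose edge sets partition $E(H)$, with $V(D_1)\cap V(D_2)=S(H)$, $\partial D_j=(\partial H\cup S(H))\cap V(D_j)$, and $F_H=S(H)\setminus\partial H$; a node with constantly many edges is a leaf with $S(H)=\emptyset$ and $F_H=V(H)\setminus\partial H$. For a set $\mathcal{H}$ of nodes, $\mathcal{P}_{\mathcal{T}}(\mathcal{H})$ is the set of all nodes lying on a tree path from some $H\in\mathcal{H}$ to the root (including $H$ and the root). $\widetilde{O}$ hides polylogarithmic factors in $m$. *)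

theory Defs
  imports "HOL-Analysis.Analysis"
begin

text \<open>Multigraphs: a finite set of edge identifiers E together with an endpoint map
  ends :: edge => vertex * vertex (parallel edges and loops allowed).  Every graph
  and region is edge-induced: its vertex set is the set of endpoints of its edges.\<close>

definition verts :: "('e \<Rightarrow> 'v \<times> 'v) \<Rightarrow> 'e set \<Rightarrow> 'v set" where
  "verts ends A = (\<Union>e\<in>A. {fst (ends e), snd (ends e)})"

definition planar_graph :: "'v set \<Rightarrow> 'e set \<Rightarrow> ('e \<Rightarrow> 'v \<times> 'v) \<Rightarrow> bool" where
  "planar_graph V E ends \<longleftrightarrow>
     (\<forall>e\<in>E. fst (ends e) \<in> V \<and> snd (ends e) \<in> V) \<and>
     (\<exists>(pos :: 'v \<Rightarrow> complex) (\<gamma> :: 'e \<Rightarrow> real \<Rightarrow> complex).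
        inj_on pos V \<and>
        (\<forall>e\<in>E. simple_path (\<gamma> e) \<and>
                pathstart (\<gamma> e) = pos (fst (ends e)) \<and>
                pathfinish (\<gamma> e) = pos (snd (ends e)) \<and>
                path_image (\<gamma> e) \<inter> pos ` V \<subseteq> {pos (fst (ends e)), pos (snd (ends e))}) \<and>
        (\<forall>e\<in>E. \<forall>e'\<in>E. e \<noteq> e' \<longrightarrow>
                path_image (\<gamma> e) \<inter> path_image (\<gamma> e') \<subseteq> pos ` V))"

text \<open>Modified planar graph: obtained from a planar graph by adding two new vertices s, t
  and any number of edges incident to them.\<close>

definition modified_planar :: "'e set \<Rightarrow> ('e \<Rightarrow> 'v \<times> 'v) \<Rightarrow> bool" where
  "modified_planar E ends \<longleftrightarrow>
     (\<exists>s t. s \<noteq> t \<and>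
        planar_graph (verts ends E - {s, t})
          {e\<in>E. s \<notin> {fst (ends e), snd (ends e)} \<and> t \<notin> {fst (ends e), snd (ends e)}} ends)"

datatype 'e stree = SLeaf "'e set" | SNode "'e stree" "'e stree"

fun sedges :: "'e stree \<Rightarrow> 'e set" where
  "sedges (SLeaf A) = A"
| "sedges (SNode l r) = sedges l \<union> sedges r"

fun ssep :: "('e \<Rightarrow> 'v \<times> 'v) \<Rightarrow> 'e stree \<Rightarrow> 'v set" where
  "ssep ends (SLeaf A) = {}"
| "ssep ends (SNode l r) = verts ends (sedges l) \<inter> verts ends (sedges r)"

text \<open>Nodes are addressed by their path from the root (False = left, True = right).\<close>
fun spositions :: "'e stree \<Rightarrow> bool list set" where
  "spositions (SLeaf A) = {[]}"
| "spositions (SNode l r) = insert [] (Cons False ` spositions l \<union> Cons True ` spositions r)"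

fun subtree :: "'e stree \<Rightarrow> bool list \<Rightarrow> 'e stree" where
  "subtree t [] = t"
| "subtree (SNode l r) (False # p) = subtree l p"
| "subtree (SNode l r) (True # p) = subtree r p"
| "subtree (SLeaf A) (b # p) = SLeaf A"

fun sheight :: "'e stree \<Rightarrow> nat" where
  "sheight (SLeaf A) = 0"
| "sheight (SNode l r) = Suc (max (sheight l) (sheight r))"

text \<open>Boundary \<partial>H, computed top-down: bnd_aux ends B t p is the boundary of the node at
  position p of t, given that the boundary of t itself is B.\<close>
fun bnd_aux :: "('e \<Rightarrow> 'v \<times> 'v) \<Rightarrow> 'v set \<Rightarrow> 'e stree \<Rightarrow> bool list \<Rightarrow> 'v set" where
  "bnd_aux ends B t [] = B"
| "bnd_aux ends B (SNode l r) (False # p) =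
     bnd_aux ends ((B \<union> ssep ends (SNode l r)) \<inter> verts ends (sedges l)) l p"
| "bnd_aux ends B (SNode l r) (True # p) =
     bnd_aux ends ((B \<union> ssep ends (SNode l r)) \<inter> verts ends (sedges r)) r p"
| "bnd_aux ends B (SLeaf A) (b # p) = {}"

definition sbnd :: "('e \<Rightarrow> 'v \<times> 'v) \<Rightarrow> 'e stree \<Rightarrow> bool list \<Rightarrow> 'v set" where
  "sbnd ends T p = bnd_aux ends {} T p"

definition sF :: "('e \<Rightarrow> 'v \<times> 'v) \<Rightarrow> 'e stree \<Rightarrow> bool list \<Rightarrow> 'v set" where
  "sF ends T p = (case subtree T p of
       SLeaf A \<Rightarrow> verts ends A - sbnd ends T p
     | SNode l r \<Rightarrow> ssep ends (SNode l r) - sbnd ends T p)"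

fun valid_stree :: "real \<Rightarrow> 'e stree \<Rightarrow> bool" where
  "valid_stree cL (SLeaf A) \<longleftrightarrow> real (card A) \<le> cL"
| "valid_stree cL (SNode l r) \<longleftrightarrow>
     sedges l \<inter> sedges r = {} \<and> real (card (sedges l \<union> sedges r)) > cL \<and>
     valid_stree cL l \<and> valid_stree cL r"

definition path_closure :: "bool list set \<Rightarrow> bool list set" where
  "path_closure Hs = {q. \<exists>p\<in>Hs. \<exists>r. p = q @ r}"

end

theory Submission
  imports Defs
begin

text \<open>
  The boundary of a node consists of separator vertices of its ancestors, and each
  separator splits into the two children's boundaries with overlap at most its own
  size; hence the boundaries along \<open>P(\<H>)\<close> sum to at most the height times twice the
  total separator size of \<open>P(\<H>)\<close>.  The sets \<open>F_H\<close> are separators or leaves of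
  bounded size, so everything is bounded by \<open>O(height)\<close> times
  \<open>\<Sum>\<^sub>H\<in>P(\<H>) \<surd>|E(H)|\<close>.  Recursing into the two children, whose edge sets
  partition the parent's and which receive disjoint parts of \<open>\<H>\<close>, the two-term
  Cauchy--Schwarz inequality \<open>\<surd>(K\<^sub>1 m\<^sub>1) + \<surd>(K\<^sub>2 m\<^sub>2) \<le> \<surd>((K\<^sub>1+K\<^sub>2)(m\<^sub>1+m\<^sub>2))\<close>
  bounds that sum by \<open>(height + 1) \<surd>(K m)\<close>.  With height \<open>O(log m)\<close> the total is
  \<open>O(\<surd>(m K) log\<^sup>2 m)\<close>.
\<close>

lemma finite_spositions: "finite (spositions t)"
  by (induction t) auto

lemma spositions_prefix: "q @ r \<in> spositions t \<Longrightarrow> q \<in> spositions t"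
proof (induction t arbitrary: q)
  case (SNode l r)
  then show ?case
    by (cases q) auto
qed simp

lemma valid_stree_subtree:
  "p \<in> spositions t \<Longrightarrow> valid_stree cL t \<Longrightarrow> valid_stree cL (subtree t p)"
  by (induction t arbitrary: p) auto

lemma sedges_subtree_subset: "sedges (subtree t p) \<subseteq> sedges t"
  by (induction t p rule: subtree.induct) auto

lemma path_closure_empty [simp]: "path_closure {} = {}"
  unfolding path_closure_def by auto

lemma Nil_in_path_closure_iff: "[] \<in> path_closure Hs \<longleftrightarrow> Hs \<noteq> {}"
  unfolding path_closure_def by auto

lemma path_closure_Cons: "{p. b # p \<in> path_closure Hs} = path_closure {p. b # p \<in> Hs}"
  unfolding path_closure_def by force

lemma path_closure_subset_spositions:
  "Hs \<subseteq> spositions t \<Longrightarrow> path_closure Hs \<subseteq> spositions t"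
  unfolding path_closure_def using spositions_prefix by blast

lemma finite_path_closure: "Hs \<subseteq> spositions t \<Longrightarrow> finite (path_closure Hs)"
  using finite_subset[OF path_closure_subset_spositions finite_spositions] .

lemma sum_bool_list_decomp:
  fixes g :: "bool list \<Rightarrow> 'a::comm_monoid_add"
  assumes "finite Q"
  shows "(\<Sum>p\<in>Q. g p) = (if [] \<in> Q then g [] else 0)
     + (\<Sum>p\<in>{p. False # p \<in> Q}. g (False # p)) + (\<Sum>p\<in>{p. True # p \<in> Q}. g (True # p))"
proof -
  define QL where "QL = {p. False # p \<in> Q}"
  define QR where "QR = {p. True # p \<in> Q}"
  have fin: "finite QL" "finite QR"
    using finite_vimageI[OF assms, of "Cons False"] finite_vimageI[OF assms, of "Cons True"]
    by (simp_all add: QL_def QR_def vimage_def)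
  have Q: "Q = (Q \<inter> {[]}) \<union> (Cons False ` QL \<union> Cons True ` QR)"
  proof (rule set_eqI)
    fix x
    show "x \<in> Q \<longleftrightarrow> x \<in> (Q \<inter> {[]}) \<union> (Cons False ` QL \<union> Cons True ` QR)"
    proof (cases x)
      case (Cons b p)
      then show ?thesis
        by (cases b) (auto simp: QL_def QR_def)
    qed auto
  qed
  have "(\<Sum>p\<in>Q. g p) = (\<Sum>p\<in>Q \<inter> {[]}. g p) + (\<Sum>p\<in>Cons False ` QL \<union> Cons True ` QR. g p)"
    by (subst Q, rule sum.union_disjoint) (use fin in auto)
  also have "(\<Sum>p\<in>Cons False ` QL \<union> Cons True ` QR. g p) = (\<Sum>p\<in>Cons False ` QL. g p) + (\<Sum>p\<in>Cons True ` QR. g p)"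
    by (rule sum.union_disjoint) (use fin in auto)
  also have "(\<Sum>p\<in>Q \<inter> {[]}. g p) + ((\<Sum>p\<in>Cons False ` QL. g p) + (\<Sum>p\<in>Cons True ` QR. g p))
      = (if [] \<in> Q then g [] else 0) + (\<Sum>p\<in>QL. g (False # p)) + (\<Sum>p\<in>QR. g (True # p))"
    by (simp add: sum.reindex add.assoc Int_insert_right)
  finally show ?thesis
    unfolding QL_def QR_def .
qed

lemma finite_verts: "finite A \<Longrightarrow> finite (verts ends A)"
  unfolding verts_def by auto

lemma card_verts_le: "finite A \<Longrightarrow> card (verts ends A) \<le> 2 * card A"
proof -
  assume "finite A"
  have "verts ends A = (fst \<circ> ends) ` A \<union> (snd \<circ> ends) ` A"
    unfolding verts_def by auto
  then have "card (verts ends A) \<le> card ((fst \<circ> ends) ` A) + card ((snd \<circ> ends) ` A)"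
    by (simp add: card_Un_le)
  also have "\<dots> \<le> 2 * card A"
    using card_image_le[OF \<open>finite A\<close>] by (metis add_mono mult_2)
  finally show ?thesis .
qed

lemma card_Int_add_card_Int_le:
  assumes "finite X" "finite (U \<inter> W)"
  shows "card (X \<inter> U) + card (X \<inter> W) \<le> card X + card (U \<inter> W)"
proof -
  have "card (X \<inter> U) + card (X \<inter> W) = card ((X \<inter> U) \<union> (X \<inter> W)) + card ((X \<inter> U) \<inter> (X \<inter> W))"
    using assms by (intro card_Un_Int) auto
  also have "\<dots> \<le> card X + card (U \<inter> W)"
    using assms by (intro add_mono card_mono) auto
  finally show ?thesis .
qed

lemma card_child_boundaries_le:
  assumes "finite B" "finite (sedges l)" "finite (sedges r)"
  shows "card ((B \<union> ssep ends (SNode l r)) \<inter> verts ends (sedges l))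
         + card ((B \<union> ssep ends (SNode l r)) \<inter> verts ends (sedges r))
       \<le> card B + 2 * card (ssep ends (SNode l r))"
proof -
  define S where "S = ssep ends (SNode l r)"
  have "finite S"
    using assms by (simp add: S_def finite_verts)
  then have "card ((B \<union> S) \<inter> verts ends (sedges l)) + card ((B \<union> S) \<inter> verts ends (sedges r))
      \<le> card (B \<union> S) + card S"
    using card_Int_add_card_Int_le[of "B \<union> S" "verts ends (sedges l)" "verts ends (sedges r)"]
      assms(1) by (simp add: S_def)
  also have "\<dots> \<le> card B + 2 * card S"
    using card_Un_le[of B S] by simp
  finally show ?thesis
    unfolding S_def .
qed

lemma card_Cons_False_add_card_Cons_True_le:
  assumes "finite Hs"
  shows "card {p. False # p \<in> Hs} + card {p. True # p \<in> Hs} \<le> card Hs"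
proof -
  have "finite {p. False # p \<in> Hs}" "finite {p. True # p \<in> Hs}"
    using finite_vimageI[OF assms, of "Cons False"] finite_vimageI[OF assms, of "Cons True"]
    by (simp_all add: vimage_def)
  then have "card {p. False # p \<in> Hs} + card {p. True # p \<in> Hs}
      = card (Cons False ` {p. False # p \<in> Hs} \<union> Cons True ` {p. True # p \<in> Hs})"
    by (subst card_Un_disjoint) (auto simp: card_image)
  also have "\<dots> \<le> card Hs"
    using assms by (intro card_mono) auto
  finally show ?thesis .
qed

lemma sqrt_mult_add_sqrt_mult_le:
  fixes a b c d :: real
  assumes "a \<ge> 0" "b \<ge> 0" "c \<ge> 0" "d \<ge> 0"
  shows "sqrt (a * b) + sqrt (c * d) \<le> sqrt ((a + c) * (b + d))"
proof (rule real_le_rsqrt)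
  have "2 * (sqrt (a * d) * sqrt (c * b)) \<le> a * d + c * b"
    using arith_geo_mean_sqrt[of "a * d" "c * b"] assms by (simp add: real_sqrt_mult)
  then show "(sqrt (a * b) + sqrt (c * d))\<^sup>2 \<le> (a + c) * (b + d)"
    using assms by (simp add: power2_eq_square real_sqrt_mult algebra_simps)
qed

lemma of_int_ceiling_sqrt_le: "real_of_int \<lceil>sqrt (real n)\<rceil> \<le> 2 * sqrt (real n)"
proof (cases "n = 0")
  case False
  then have "1 \<le> sqrt (real n)"
    by simp
  then show ?thesis
    using of_int_ceiling_le_add_one[of "sqrt (real n)"] by linarith
qed simp

lemma sum_card_bnd_aux_le:
  assumes "Hs \<subseteq> spositions t" "finite B" "finite (sedges t)"
  shows "(\<Sum>p\<in>path_closure Hs. card (bnd_aux ends B t p))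
     \<le> (sheight t + 1) * (card B + 2 * (\<Sum>p\<in>path_closure Hs. card (ssep ends (subtree t p))))"
  using assms
proof (induction t arbitrary: B Hs)
  case (SLeaf A)
  then show ?case
    by (subst sum_bool_list_decomp[OF finite_path_closure[OF SLeaf.prems(1)]]) auto
next
  case (SNode l r)
  define S where "S = ssep ends (SNode l r)"
  define Bl where "Bl = (B \<union> S) \<inter> verts ends (sedges l)"
  define Br where "Br = (B \<union> S) \<inter> verts ends (sedges r)"
  define HL where "HL = {p. False # p \<in> Hs}"
  define HR where "HR = {p. True # p \<in> Hs}"
  define Sl where "Sl = (\<Sum>p\<in>path_closure HL. card (ssep ends (subtree l p)))"
  define Sr where "Sr = (\<Sum>p\<in>path_closure HR. card (ssep ends (subtree r p)))"
  define h where "h = sheight (SNode l r)"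
  show ?case
  proof (cases "Hs = {}")
    case True
    then show ?thesis
      by simp
  next
    case False
    have fin: "finite (sedges l)" "finite (sedges r)"
      using SNode.prems(3) by auto
    have sub: "HL \<subseteq> spositions l" "HR \<subseteq> spositions r"
      using SNode.prems(1) by (auto simp: HL_def HR_def)
    have finB: "finite Bl" "finite Br"
      using fin by (simp_all add: Bl_def Br_def finite_verts)
    have h: "sheight l + 1 \<le> h" "sheight r + 1 \<le> h"
      by (simp_all add: h_def)
    have "(\<Sum>p\<in>path_closure HL. card (bnd_aux ends Bl l p)) \<le> (sheight l + 1) * (card Bl + 2 * Sl)"
      using SNode.IH(1)[OF sub(1) finB(1) fin(1)] by (simp add: Sl_def)
    also have "\<dots> \<le> h * (card Bl + 2 * Sl)"
      using h(1) by (rule mult_right_mono) simp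
    finally have IHl: "(\<Sum>p\<in>path_closure HL. card (bnd_aux ends Bl l p)) \<le> h * (card Bl + 2 * Sl)" .
    have "(\<Sum>p\<in>path_closure HR. card (bnd_aux ends Br r p)) \<le> (sheight r + 1) * (card Br + 2 * Sr)"
      using SNode.IH(2)[OF sub(2) finB(2) fin(2)] by (simp add: Sr_def)
    also have "\<dots> \<le> h * (card Br + 2 * Sr)"
      using h(2) by (rule mult_right_mono) simp
    finally have IHr: "(\<Sum>p\<in>path_closure HR. card (bnd_aux ends Br r p)) \<le> h * (card Br + 2 * Sr)" .
    have "card Bl + card Br \<le> card B + 2 * card S"
      using card_child_boundaries_le[OF SNode.prems(2) fin, of ends] by (simp add: Bl_def Br_def S_def)
    then have split: "h * (card Bl + 2 * Sl) + h * (card Br + 2 * Sr) \<le> h * (card B + 2 * (card S + Sl + Sr))"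
      by (simp add: algebra_simps flip: distrib_left)
    have "(\<Sum>p\<in>path_closure Hs. card (bnd_aux ends B (SNode l r) p))
       = card B + (\<Sum>p\<in>path_closure HL. card (bnd_aux ends Bl l p))
         + (\<Sum>p\<in>path_closure HR. card (bnd_aux ends Br r p))"
      using False
      by (subst sum_bool_list_decomp[OF finite_path_closure[OF SNode.prems(1)]])
        (simp add: Nil_in_path_closure_iff path_closure_Cons HL_def HR_def Bl_def Br_def S_def)
    also have "\<dots> \<le> card B + h * (card B + 2 * (card S + Sl + Sr))"
      using IHl IHr split by linarith
    also have "\<dots> \<le> (h + 1) * (card B + 2 * (card S + Sl + Sr))"
      by simp
    also have "card S + Sl + Sr = (\<Sum>p\<in>path_closure Hs. card (ssep ends (subtree (SNode l r) p)))"
      using False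
      by (subst sum_bool_list_decomp[OF finite_path_closure[OF SNode.prems(1)]])
        (simp add: Nil_in_path_closure_iff path_closure_Cons HL_def HR_def Sl_def Sr_def S_def)
    finally show ?thesis
      unfolding h_def .
  qed
qed

lemma sum_sqrt_card_sedges_le:
  assumes "Hs \<subseteq> spositions t" "valid_stree cL t" "finite (sedges t)"
  shows "(\<Sum>p\<in>path_closure Hs. sqrt (real (card (sedges (subtree t p)))))
     \<le> real (sheight t + 1) * sqrt (real (card Hs) * real (card (sedges t)))"
  using assms
proof (induction t arbitrary: Hs)
  case (SLeaf A)
  have "path_closure {[]} = {[]}"
    unfolding path_closure_def by auto
  moreover have "Hs = {} \<or> Hs = {[]}"
    using SLeaf.prems(1) by auto
  ultimately show ?case
    by (elim disjE) simp_all
next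
  case (SNode l r)
  define HL where "HL = {p. False # p \<in> Hs}"
  define HR where "HR = {p. True # p \<in> Hs}"
  define K where "K = real (card Hs)"
  define m where "m = real (card (sedges (SNode l r)))"
  define ml where "ml = real (card (sedges l))"
  define mr where "mr = real (card (sedges r))"
  define h where "h = real (sheight (SNode l r))"
  define \<Phi>l where "\<Phi>l = (\<Sum>p\<in>path_closure HL. sqrt (real (card (sedges (subtree l p)))))"
  define \<Phi>r where "\<Phi>r = (\<Sum>p\<in>path_closure HR. sqrt (real (card (sedges (subtree r p)))))"
  show ?case
  proof (cases "Hs = {}")
    case True
    then show ?thesis
      by simp
  next
    case False
    have finH: "finite Hs"
      using SNode.prems(1) finite_spositions finite_subset by blast
    have sub: "HL \<subseteq> spositions l" "HR \<subseteq> spositions r"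
      using SNode.prems(1) by (auto simp: HL_def HR_def)
    have fin: "finite (sedges l)" "finite (sedges r)" and valid: "valid_stree cL l" "valid_stree cL r"
      using SNode.prems(2,3) by auto
    have m: "m = ml + mr"
      using SNode.prems(2) card_Un_disjoint[OF fin] by (simp add: m_def ml_def mr_def)
    have "card HL + card HR \<le> card Hs"
      unfolding HL_def HR_def using card_Cons_False_add_card_Cons_True_le[OF finH] .
    then have K: "real (card HL) + real (card HR) \<le> K"
      unfolding K_def by linarith
    have "1 \<le> K"
      using False finH by (simp add: K_def Suc_leI card_gt_0_iff)
    then have root: "sqrt m \<le> sqrt (K * m)"
      by (simp add: m_def mult_le_cancel_right1)
    have "\<Phi>l \<le> real (sheight l + 1) * sqrt (real (card HL) * ml)"
      using SNode.IH(1)[OF sub(1) valid(1) fin(1)] by (simp add: \<Phi>l_def ml_def)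
    also have "\<dots> \<le> h * sqrt (real (card HL) * ml)"
      by (rule mult_right_mono) (simp_all add: h_def ml_def mr_def)
    finally have IHl: "\<Phi>l \<le> h * sqrt (real (card HL) * ml)" .
    have "\<Phi>r \<le> real (sheight r + 1) * sqrt (real (card HR) * mr)"
      using SNode.IH(2)[OF sub(2) valid(2) fin(2)] by (simp add: \<Phi>r_def mr_def)
    also have "\<dots> \<le> h * sqrt (real (card HR) * mr)"
      by (rule mult_right_mono) (simp_all add: h_def ml_def mr_def)
    finally have IHr: "\<Phi>r \<le> h * sqrt (real (card HR) * mr)" .
    have "sqrt (real (card HL) * ml) + sqrt (real (card HR) * mr)
        \<le> sqrt ((real (card HL) + real (card HR)) * (ml + mr))"
      by (rule sqrt_mult_add_sqrt_mult_le) (simp_all add: ml_def mr_def)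
    also have "\<dots> \<le> sqrt (K * m)"
      using K by (simp add: m ml_def mr_def mult_right_mono)
    finally have "h * (sqrt (real (card HL) * ml) + sqrt (real (card HR) * mr)) \<le> h * sqrt (K * m)"
      by (rule mult_left_mono) (simp add: h_def)
    then have children: "\<Phi>l + \<Phi>r \<le> h * sqrt (K * m)"
      using IHl IHr by (simp add: distrib_left)
    have "(\<Sum>p\<in>path_closure Hs. sqrt (real (card (sedges (subtree (SNode l r) p)))))
        = sqrt m + \<Phi>l + \<Phi>r"
      using False unfolding \<Phi>l_def \<Phi>r_def
      by (subst sum_bool_list_decomp[OF finite_path_closure[OF SNode.prems(1)]])
        (simp add: Nil_in_path_closure_iff path_closure_Cons HL_def HR_def m_def)
    also have "\<dots> \<le> (h + 1) * sqrt (K * m)"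
      using root children by (simp add: distrib_right del: real_sqrt_le_iff real_sqrt_mult)
    finally show ?thesis
      unfolding h_def K_def m_def by simp
  qed
qed

lemma card_sF_le:
  assumes "valid_stree cL T" "finite (sedges T)" "p \<in> spositions T"
  shows "real (card (sF ends T p)) \<le> real (card (ssep ends (subtree T p)))
           + 2 * sqrt (max cL 0) * sqrt (real (card (sedges (subtree T p))))"
proof (cases "subtree T p")
  case (SLeaf A)
  have "finite A"
    using sedges_subtree_subset[of T p] assms(2) SLeaf by (auto intro: finite_subset)
  have "valid_stree cL (SLeaf A)"
    using valid_stree_subtree[OF assms(3,1)] SLeaf by simp
  then have "sqrt (real (card A)) \<le> sqrt (max cL 0)"
    by simp
  from mult_right_mono[OF this, of "sqrt (real (card A))"]
  have "real (card A) \<le> sqrt (max cL 0) * sqrt (real (card A))"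
    by simp
  moreover have "card (verts ends A - sbnd ends T p) \<le> 2 * card A"
    using card_verts_le[OF \<open>finite A\<close>, of ends] card_mono[OF finite_verts[OF \<open>finite A\<close>], of _ ends]
    by (meson Diff_subset order_trans)
  ultimately show ?thesis
    using SLeaf by (simp add: sF_def)
next
  case (SNode l r)
  have "finite (sedges (SNode l r))"
    using sedges_subtree_subset[of T p] assms(2) SNode by (metis finite_subset)
  then have "card (ssep ends (SNode l r) - sbnd ends T p) \<le> card (ssep ends (SNode l r))"
    by (intro card_mono) (auto simp: finite_verts)
  then show ?thesis
    using SNode unfolding sF_def by (auto intro!: add_increasing2)
qed

lemma le_mult_ceiling_sqrt_imp:
  fixes x c :: real
  assumes "x \<le> c * real_of_int \<lceil>sqrt (real n)\<rceil>"
  shows "x \<le> 2 * max c 0 * sqrt (real n)"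
proof -
  have "0 \<le> real_of_int \<lceil>sqrt (real n)\<rceil>"
    using le_of_int_ceiling[of "sqrt (real n)"] real_sqrt_ge_zero[of "real n"] by linarith
  then have "c * real_of_int \<lceil>sqrt (real n)\<rceil> \<le> max c 0 * real_of_int \<lceil>sqrt (real n)\<rceil>"
    by (rule mult_right_mono[rotated]) simp
  also have "\<dots> \<le> max c 0 * (2 * sqrt (real n))"
    by (rule mult_left_mono[OF of_int_ceiling_sqrt_le]) simp
  finally show ?thesis
    using assms by simp
qed

lemma sum_card_sbnd_sF_le:
  assumes valid: "valid_stree cL T" and fin: "finite (sedges T)" and Hs: "Hs \<subseteq> spositions T"
    and sep: "\<forall>p\<in>spositions T. real (card (ssep ends (subtree T p)))
                \<le> c * real_of_int \<lceil>sqrt (real (card (sedges (subtree T p))))\<rceil>"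
  shows "real (\<Sum>p\<in>path_closure Hs. card (sbnd ends T p) + card (sF ends T p))
     \<le> 3 * (2 * max c 0 + 2 * sqrt (max cL 0)) * real (sheight T + 1) ^ 2
          * sqrt (real (card (sedges T)) * real (card Hs))"
proof -
  define Q where "Q = path_closure Hs"
  define a where "a = 2 * max c 0"
  define b where "b = 2 * sqrt (max cL 0)"
  define h where "h = real (sheight T + 1)"
  define \<Phi> where "\<Phi> = (\<Sum>p\<in>Q. sqrt (real (card (sedges (subtree T p)))))"
  define SS where "SS = (\<Sum>p\<in>Q. real (card (ssep ends (subtree T p))))"
  have Q: "Q \<subseteq> spositions T"
    unfolding Q_def using path_closure_subset_spositions[OF Hs] .
  have nonneg: "0 \<le> a" "0 \<le> b" "0 \<le> \<Phi>" "0 \<le> SS" "1 \<le> h"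
    by (auto simp: a_def b_def \<Phi>_def SS_def h_def intro: sum_nonneg)
  have "SS \<le> (\<Sum>p\<in>Q. a * sqrt (real (card (sedges (subtree T p)))))"
    unfolding SS_def a_def using sep Q by (intro sum_mono le_mult_ceiling_sqrt_imp) auto
  then have SS: "SS \<le> a * \<Phi>"
    by (simp add: \<Phi>_def sum_distrib_left)
  have "(\<Sum>p\<in>Q. card (sbnd ends T p)) \<le> (sheight T + 1) * (2 * (\<Sum>p\<in>Q. card (ssep ends (subtree T p))))"
    using sum_card_bnd_aux_le[OF Hs finite.emptyI fin, of ends] by (simp add: Q_def sbnd_def)
  then have bnd: "real (\<Sum>p\<in>Q. card (sbnd ends T p)) \<le> h * (2 * SS)"
    unfolding h_def SS_def by (metis of_nat_le_iff of_nat_mult of_nat_numeral of_nat_sum)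
  have "real (\<Sum>p\<in>Q. card (sF ends T p)) \<le> (\<Sum>p\<in>Q. real (card (ssep ends (subtree T p)))
      + b * sqrt (real (card (sedges (subtree T p)))))"
    unfolding of_nat_sum b_def using card_sF_le[OF valid fin] Q by (intro sum_mono) auto
  then have F: "real (\<Sum>p\<in>Q. card (sF ends T p)) \<le> SS + b * \<Phi>"
    by (simp add: SS_def \<Phi>_def sum.distrib sum_distrib_left)
  have \<Phi>: "\<Phi> \<le> h * sqrt (real (card (sedges T)) * real (card Hs))"
    using sum_sqrt_card_sedges_le[OF Hs valid fin] unfolding \<Phi>_def Q_def h_def
    by (simp add: mult.commute)
  have "real (\<Sum>p\<in>Q. card (sbnd ends T p) + card (sF ends T p)) \<le> (2 * h + 1) * SS + b * \<Phi>"
    using bnd F by (simp add: sum.distrib algebra_simps)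
  also have "\<dots> \<le> 3 * h * (a * \<Phi>) + 3 * h * (b * \<Phi>)"
  proof (rule add_mono)
    show "(2 * h + 1) * SS \<le> 3 * h * (a * \<Phi>)"
      using SS nonneg by (intro mult_mono) auto
    show "b * \<Phi> \<le> 3 * h * (b * \<Phi>)"
      using mult_right_mono[of 1 "3 * h" "b * \<Phi>"] nonneg by simp
  qed
  also have "\<dots> = 3 * (a + b) * h * \<Phi>"
    by (simp add: algebra_simps)
  also have "\<dots> \<le> 3 * (a + b) * h * (h * sqrt (real (card (sedges T)) * real (card Hs)))"
    using \<Phi> nonneg by (intro mult_left_mono) auto
  finally show ?thesis
    unfolding Q_def a_def b_def h_def by (simp add: power2_eq_square algebra_simps)
qed

lemma sum_card_sbnd_sF_le_log:
  assumes "valid_stree cL T" "finite (sedges T)" "Hs \<subseteq> spositions T"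
    and "\<forall>p\<in>spositions T. real (card (ssep ends (subtree T p)))
           \<le> c * real_of_int \<lceil>sqrt (real (card (sedges (subtree T p))))\<rceil>"
    and height: "real (sheight T) \<le> c\<eta> * log 2 (real (card (sedges T)) + 2)"
  shows "real (\<Sum>p\<in>path_closure Hs. card (sbnd ends T p) + card (sF ends T p))
     \<le> 3 * (2 * max c 0 + 2 * sqrt (max cL 0)) * (max c\<eta> 0 + 1) ^ 2
         * sqrt (real (card (sedges T)) * real (card Hs)) * log 2 (real (card (sedges T)) + 2) ^ 2"
proof -
  define a where "a = 3 * (2 * max c 0 + 2 * sqrt (max cL 0))"
  define L where "L = log 2 (real (card (sedges T)) + 2)"
  have "1 \<le> L"
    by (simp add: L_def)
  moreover have "c\<eta> * L \<le> max c\<eta> 0 * L"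
    using \<open>1 \<le> L\<close> by (intro mult_right_mono) auto
  ultimately have "real (sheight T + 1) \<le> (max c\<eta> 0 + 1) * L"
    using height[folded L_def] unfolding of_nat_Suc distrib_right by linarith
  then have "real (sheight T + 1) ^ 2 \<le> ((max c\<eta> 0 + 1) * L) ^ 2"
    by (rule power_mono) simp
  have "real (\<Sum>p\<in>path_closure Hs. card (sbnd ends T p) + card (sF ends T p))
      \<le> a * real (sheight T + 1) ^ 2 * sqrt (real (card (sedges T)) * real (card Hs))"
    using sum_card_sbnd_sF_le[OF assms(1-4)] unfolding a_def .
  also have "\<dots> \<le> a * ((max c\<eta> 0 + 1) * L) ^ 2 * sqrt (real (card (sedges T)) * real (card Hs))"
    using \<open>real (sheight T + 1) ^ 2 \<le> _\<close> by (intro mult_right_mono mult_left_mono) (simp_all add: a_def)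
  also have "\<dots> = a * (max c\<eta> 0 + 1) ^ 2 * sqrt (real (card (sedges T)) * real (card Hs)) * L ^ 2"
    by (simp add: power_mult_distrib mult_ac)
  finally show ?thesis
    unfolding a_def L_def .
qed

text \<open>Planarity only serves to build a separator tree with the assumed separator bound.\<close>

theorem mainTheorem5:
  shows "\<forall>(c::real) (c\<eta>::real) (cL::real). \<exists>(C::real) (k::nat).
    \<forall>(E::nat set) (ends::nat \<Rightarrow> nat \<times> nat) (T::nat stree) (Hs::bool list set).
      finite E \<and> modified_planar E ends \<and>
      valid_stree cL T \<and> sedges T = E \<and>
      real (sheight T) \<le> c\<eta> * log 2 (real (card E) + 2) \<and>
      (\<forall>p\<in>spositions T. real (card (ssep ends (subtree T p)))
            \<le> c * real_of_int \<lceil>sqrt (real (card (sedges (subtree T p))))\<rceil>) \<and>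
      Hs \<subseteq> spositions T
      \<longrightarrow> real (\<Sum>p\<in>path_closure Hs. card (sbnd ends T p) + card (sF ends T p))
          \<le> C * sqrt (real (card E) * real (card Hs)) * (log 2 (real (card E) + 2)) ^ k"
  by (intro allI exI impI, elim conjE, hypsubst, rule sum_card_sbnd_sF_le_log) assumption+

end
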